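(* Assume the setting below, with $\inf H>0$. Define $\tilde\tau:Y\to\mathbb Z^+$ by $\tilde\tau|_{Y_j}=\big[\|1_{Y_j}H\|_\theta\big]+1$ (integer part), where $\|1_{Y_j}H\|_\theta=\sup_{Y_j}|H|+\sup_{y\ne y'\in Y_j}|H(y)-H(y')|/d_\theta(y,y')$, and on $\Delta=\{(y,\ell)\in Y\times\mathbb Z:0\le\ell\le\tilde\tau(y)-1\}$ define $\tilde h(y,\ell)=H(y)/\tilde\tau(y)$. Then: (a) $H(y)=\sum_{\ell=0}^{\tilde\tau(y)-1}\tilde h(y,\ell)$ for all $y\in Y$; (b) $0<\inf\tilde h\le|\tilde h|_\infty\le1$ and $|\tilde h(y,\ell)-\tilde h(y',\ell)|\le d_\theta(y,y')$ for all $y,y'\in Y_j$, $j\ge1$, $0\le\ell\le\tilde\tau(y)-1$.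
   Context: Let $Y$ be a set with an at most countable partition $\{Y_j\}$ and a map $F:Y\to Y$; the separation time $s(y,y')$ is the least $n\ge0$ with $F^ny,F^ny'$ in distinct $Y_j$, and $d_\theta(y,y')=\theta^{s(y,y')}$ for a fixed $\theta\in(0,1)$. Let $H:Y\to(0,\infty)$ (the induced roof function of a nonuniformly expanding semiflow) satisfy: there is $C\ge1$ such that for all $j$, $\sup_{y\ne y'\in Y_j}|H(y)-H(y')|/d_\theta(y,y')\le C\inf_{Y_j}H$ (in particular $H$ is piecewise $d_\theta$-Lipschitz). *)

theory Defs
  imports Complex_Main
begin

text \<open>The partition {Y_j} of Y is encoded by an index map idx : Y -> nat,
  Y_j = {y. idx y = j}. Y is the ambient type 'a.\<close>

definition piece :: "('a \<Rightarrow> nat) \<Rightarrow> nat \<Rightarrow> 'a set" where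
  "piece idx j = {y. idx y = j}"

text \<open>Separation time: least n with F^n y, F^n y' in distinct pieces
  (None = infinity if they are never separated).\<close>
definition sep_time :: "('a \<Rightarrow> nat) \<Rightarrow> ('a \<Rightarrow> 'a) \<Rightarrow> 'a \<Rightarrow> 'a \<Rightarrow> nat option" where
  "sep_time idx F y y' =
     (if \<exists>n. idx ((F ^^ n) y) \<noteq> idx ((F ^^ n) y')
      then Some (LEAST n. idx ((F ^^ n) y) \<noteq> idx ((F ^^ n) y')) else None)"

definition d_theta :: "real \<Rightarrow> ('a \<Rightarrow> nat) \<Rightarrow> ('a \<Rightarrow> 'a) \<Rightarrow> 'a \<Rightarrow> 'a \<Rightarrow> real" where
  "d_theta \<theta> idx F y y' =
     (case sep_time idx F y y' of Some n \<Rightarrow> \<theta> ^ n | None \<Rightarrow> 0)"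

definition lip_piece :: "real \<Rightarrow> ('a \<Rightarrow> nat) \<Rightarrow> ('a \<Rightarrow> 'a) \<Rightarrow> ('a \<Rightarrow> real) \<Rightarrow> nat \<Rightarrow> real" where
  "lip_piece \<theta> idx F H j =
     Sup (insert 0 {\<bar>H y - H y'\<bar> / d_theta \<theta> idx F y y' | y y'.
                     y \<in> piece idx j \<and> y' \<in> piece idx j \<and> y \<noteq> y'})"

definition theta_norm_piece :: "real \<Rightarrow> ('a \<Rightarrow> nat) \<Rightarrow> ('a \<Rightarrow> 'a) \<Rightarrow> ('a \<Rightarrow> real) \<Rightarrow> nat \<Rightarrow> real" where
  "theta_norm_piece \<theta> idx F H j =
     Sup (insert 0 ((\<lambda>y. \<bar>H y\<bar>) ` piece idx j)) + lip_piece \<theta> idx F H j"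

definition tau_tilde :: "real \<Rightarrow> ('a \<Rightarrow> nat) \<Rightarrow> ('a \<Rightarrow> 'a) \<Rightarrow> ('a \<Rightarrow> real) \<Rightarrow> 'a \<Rightarrow> nat" where
  "tau_tilde \<theta> idx F H y = nat \<lfloor>theta_norm_piece \<theta> idx F H (idx y)\<rfloor> + 1"

definition h_tilde :: "real \<Rightarrow> ('a \<Rightarrow> nat) \<Rightarrow> ('a \<Rightarrow> 'a) \<Rightarrow> ('a \<Rightarrow> real) \<Rightarrow> 'a \<Rightarrow> nat \<Rightarrow> real" where
  "h_tilde \<theta> idx F H y l = H y / real (tau_tilde \<theta> idx F H y)"

definition Delta :: "real \<Rightarrow> ('a \<Rightarrow> nat) \<Rightarrow> ('a \<Rightarrow> 'a) \<Rightarrow> ('a \<Rightarrow> real) \<Rightarrow> ('a \<times> nat) set" where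
  "Delta \<theta> idx F H = {(y, l). l < tau_tilde \<theta> idx F H y}"

end

theory Submission
  imports Defs
begin

text \<open>Since d_theta \<le> 1, regularity bounds the oscillation of H on Y_j by C inf_{Y_j} H, so
  \<parallel>1_{Y_j} H\<parallel>_theta \<le> (1 + 2C) H(y) for every y in Y_j. As tau~ exceeds this norm by at most
  one, h~ = H/tau~ is at least inf H / ((1 + 2C) inf H + 1). As tau~ exceeds the norm, which
  dominates both sup_{Y_j} H and the Lipschitz constant of H on Y_j, h~ is at most one and
  d_theta-Lipschitz on each piece.\<close>

lemma d_theta_nonneg: "0 \<le> \<theta> \<Longrightarrow> 0 \<le> d_theta \<theta> idx F y y'"
  unfolding d_theta_def by (auto split: option.split)

lemma d_theta_le_one: "0 \<le> \<theta> \<Longrightarrow> \<theta> \<le> 1 \<Longrightarrow> d_theta \<theta> idx F y y' \<le> 1"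
  unfolding d_theta_def by (auto split: option.split simp: power_le_one)

definition lip_quotients :: "real \<Rightarrow> ('a \<Rightarrow> nat) \<Rightarrow> ('a \<Rightarrow> 'a) \<Rightarrow> ('a \<Rightarrow> real) \<Rightarrow> nat \<Rightarrow> real set" where
  "lip_quotients \<theta> idx F H j = {\<bar>H y - H y'\<bar> / d_theta \<theta> idx F y y' | y y'.
     y \<in> piece idx j \<and> y' \<in> piece idx j \<and> y \<noteq> y'}"

definition sup_abs_piece :: "('a \<Rightarrow> nat) \<Rightarrow> ('a \<Rightarrow> real) \<Rightarrow> nat \<Rightarrow> real" where
  "sup_abs_piece idx H j = Sup (insert 0 ((\<lambda>y. \<bar>H y\<bar>) ` piece idx j))"

lemma lip_piece_eq_Sup_lip_quotients:
  "lip_piece \<theta> idx F H j = Sup (insert 0 (lip_quotients \<theta> idx F H j))"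
  unfolding lip_piece_def lip_quotients_def ..

lemma theta_norm_piece_eq:
  "theta_norm_piece \<theta> idx F H j = sup_abs_piece idx H j + lip_piece \<theta> idx F H j"
  unfolding theta_norm_piece_def sup_abs_piece_def ..

context
  fixes \<theta> :: real and idx :: "'a \<Rightarrow> nat" and F :: "'a \<Rightarrow> 'a" and H :: "'a \<Rightarrow> real"
    and j :: nat and B :: real
  assumes theta_nonneg: "0 \<le> \<theta>" and B_nonneg: "0 \<le> B"
    and lipschitz: "\<And>y y'. y \<in> piece idx j \<Longrightarrow> y' \<in> piece idx j \<Longrightarrow> y \<noteq> y' \<Longrightarrow>
      \<bar>H y - H y'\<bar> \<le> B * d_theta \<theta> idx F y y'"
begin

lemma lip_quotients_le: "q \<in> lip_quotients \<theta> idx F H j \<Longrightarrow> q \<le> B"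
proof -
  assume "q \<in> lip_quotients \<theta> idx F H j"
  then obtain y y' where y: "y \<in> piece idx j" "y' \<in> piece idx j" "y \<noteq> y'"
    and q: "q = \<bar>H y - H y'\<bar> / d_theta \<theta> idx F y y'"
    unfolding lip_quotients_def by blast
  show "q \<le> B"
  proof (cases "d_theta \<theta> idx F y y' = 0")
    case False
    then have "0 < d_theta \<theta> idx F y y'"
      using d_theta_nonneg[OF theta_nonneg] by (simp add: order_less_le)
    then show ?thesis using lipschitz[OF y] by (simp add: q divide_le_eq)
  qed (simp add: q B_nonneg)
qed

lemma lip_piece_nonneg: "0 \<le> lip_piece \<theta> idx F H j"
  unfolding lip_piece_eq_Sup_lip_quotients
  by (rule cSup_upper) (auto intro: bdd_aboveI lip_quotients_le B_nonneg)

lemma lip_piece_le: "lip_piece \<theta> idx F H j \<le> B"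
  unfolding lip_piece_eq_Sup_lip_quotients
  by (rule cSup_least) (auto intro: lip_quotients_le B_nonneg)

lemma abs_diff_le_lip_piece:
  assumes y: "y \<in> piece idx j" and y': "y' \<in> piece idx j"
  shows "\<bar>H y - H y'\<bar> \<le> lip_piece \<theta> idx F H j * d_theta \<theta> idx F y y'"
proof (cases "y = y'")
  case True
  then show ?thesis
    using lip_piece_nonneg d_theta_nonneg[OF theta_nonneg, of idx F y' y'] by simp
next
  case ne: False
  show ?thesis
  proof (cases "d_theta \<theta> idx F y y' = 0")
    case True
    then show ?thesis using lipschitz[OF y y' ne] by simp
  next
    case False
    then have d_pos: "0 < d_theta \<theta> idx F y y'"
      using d_theta_nonneg[OF theta_nonneg] by (simp add: order_less_le)
    have "\<bar>H y - H y'\<bar> / d_theta \<theta> idx F y y' \<in> lip_quotients \<theta> idx F H j"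
      unfolding lip_quotients_def using y y' ne by blast
    then have "\<bar>H y - H y'\<bar> / d_theta \<theta> idx F y y' \<le> lip_piece \<theta> idx F H j"
      unfolding lip_piece_eq_Sup_lip_quotients
      by (auto intro!: cSup_upper bdd_aboveI lip_quotients_le B_nonneg)
    then show ?thesis using d_pos by (simp add: divide_le_eq)
  qed
qed

end

lemma sup_abs_piece_nonneg:
  assumes "\<And>y. y \<in> piece idx j \<Longrightarrow> \<bar>H y\<bar> \<le> B"
  shows "0 \<le> sup_abs_piece idx H j"
  unfolding sup_abs_piece_def
  by (rule cSup_upper) (use assms in \<open>auto intro!: bdd_aboveI2\<close>)

lemma abs_le_sup_abs_piece:
  assumes "\<And>y. y \<in> piece idx j \<Longrightarrow> \<bar>H y\<bar> \<le> B" and "y \<in> piece idx j"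
  shows "\<bar>H y\<bar> \<le> sup_abs_piece idx H j"
  unfolding sup_abs_piece_def
  by (rule cSup_upper) (use assms in \<open>auto intro!: bdd_aboveI2\<close>)

lemma sup_abs_piece_le:
  assumes "\<And>y. y \<in> piece idx j \<Longrightarrow> \<bar>H y\<bar> \<le> B" and "0 \<le> B"
  shows "sup_abs_piece idx H j \<le> B"
  unfolding sup_abs_piece_def by (rule cSup_least) (use assms in auto)

lemma divide_affine_mono:
  fixes x x' K :: real
  assumes "0 \<le> x" "x \<le> x'" "0 \<le> K"
  shows "x / (K * x + 1) \<le> x' / (K * x' + 1)"
proof -
  have "0 \<le> K * x" "0 \<le> K * x'"
    using assms by simp_all
  then have "0 < K * x + 1" "0 < K * x' + 1"
    by linarith+
  moreover have "x * (K * x' + 1) \<le> x' * (K * x + 1)"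
    using assms by (simp add: algebra_simps)
  ultimately show ?thesis by (simp add: divide_le_eq le_divide_eq mult.commute)
qed

lemma theta_norm_piece_lt_tau_tilde:
  "theta_norm_piece \<theta> idx F H (idx y) < real (tau_tilde \<theta> idx F H y)"
  unfolding tau_tilde_def by linarith

lemma tau_tilde_le:
  "0 \<le> theta_norm_piece \<theta> idx F H (idx y) \<Longrightarrow>
     real (tau_tilde \<theta> idx F H y) \<le> theta_norm_piece \<theta> idx F H (idx y) + 1"
  unfolding tau_tilde_def by linarith

lemma tau_tilde_pos: "0 < tau_tilde \<theta> idx F H y"
  unfolding tau_tilde_def by simp

lemma tau_tilde_eq_if_same_piece:
  "idx y = idx y' \<Longrightarrow> tau_tilde \<theta> idx F H y = tau_tilde \<theta> idx F H y'"
  unfolding tau_tilde_def by simp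

lemma sum_h_tilde: "(\<Sum>l<tau_tilde \<theta> idx F H y. h_tilde \<theta> idx F H y l) = H y"
  using tau_tilde_pos[of \<theta> idx F H y] by (simp add: h_tilde_def)

lemma Delta_base: "(y, 0) \<in> Delta \<theta> idx F H"
  unfolding Delta_def using tau_tilde_pos by simp

locale regular_roof =
  fixes \<theta> :: real and idx :: "'a \<Rightarrow> nat" and F :: "'a \<Rightarrow> 'a" and H :: "'a \<Rightarrow> real"
    and C :: real
  assumes theta_nonneg: "0 \<le> \<theta>" and theta_le_one: "\<theta> \<le> 1"
    and H_nonneg: "\<And>y. 0 \<le> H y"
    and C_nonneg: "0 \<le> C"
    and H_regular: "\<forall>j. \<forall>y\<in>piece idx j. \<forall>y'\<in>piece idx j. y \<noteq> y' \<longrightarrow>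
      \<bar>H y - H y'\<bar> \<le> C * Inf (H ` piece idx j) * d_theta \<theta> idx F y y'"
begin

abbreviation "inf_piece j \<equiv> Inf (H ` piece idx j)"

lemma inf_piece_le: "y \<in> piece idx j \<Longrightarrow> inf_piece j \<le> H y"
  by (rule cInf_lower) (auto intro: bdd_belowI[of _ 0] H_nonneg)

lemma inf_piece_nonneg: "y \<in> piece idx j \<Longrightarrow> 0 \<le> inf_piece j"
  by (rule cInf_greatest) (auto intro: H_nonneg)

lemma lipschitz_piece:
  "y \<in> piece idx j \<Longrightarrow> y' \<in> piece idx j \<Longrightarrow> y \<noteq> y' \<Longrightarrow>
     \<bar>H y - H y'\<bar> \<le> (C * inf_piece j) * d_theta \<theta> idx F y y'"
  using H_regular by blast

lemma H_le_inf_piece_mult: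
  assumes y: "y \<in> piece idx j"
  shows "H y \<le> (1 + C) * inf_piece j"
proof -
  have "H y - C * inf_piece j \<le> inf_piece j"
  proof (rule cInf_greatest)
    fix x assume "x \<in> H ` piece idx j"
    then obtain y' where y': "y' \<in> piece idx j" and x: "x = H y'" by blast
    have "H y - H y' \<le> C * inf_piece j"
    proof (cases "y = y'")
      case True
      then show ?thesis using C_nonneg inf_piece_nonneg[OF y] by simp
    next
      case False
      have "H y - H y' \<le> (C * inf_piece j) * d_theta \<theta> idx F y y'"
        using lipschitz_piece[OF y y' False] by linarith
      also have "\<dots> \<le> C * inf_piece j"
        using d_theta_le_one[OF theta_nonneg theta_le_one, of idx F y y'] C_nonneg
          inf_piece_nonneg[OF y]
        by (simp add: mult_left_le)
      finally show ?thesis .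
    qed
    then show "H y - C * inf_piece j \<le> x" using x by simp
  qed (use y in auto)
  then show ?thesis by (simp add: algebra_simps)
qed

lemma theta_norm_piece_le:
  assumes y: "y \<in> piece idx j"
  shows "theta_norm_piece \<theta> idx F H j \<le> (1 + 2 * C) * H y"
proof -
  have "sup_abs_piece idx H j \<le> (1 + C) * inf_piece j"
    using H_le_inf_piece_mult H_nonneg C_nonneg inf_piece_nonneg[OF y]
    by (intro sup_abs_piece_le) auto
  moreover have "lip_piece \<theta> idx F H j \<le> C * inf_piece j"
    using theta_nonneg C_nonneg inf_piece_nonneg[OF y] lipschitz_piece
    by (intro lip_piece_le) auto
  moreover have "(1 + 2 * C) * inf_piece j \<le> (1 + 2 * C) * H y"
    using inf_piece_le[OF y] C_nonneg by (intro mult_left_mono) auto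
  ultimately show ?thesis
    unfolding theta_norm_piece_eq by (simp add: algebra_simps)
qed

lemma abs_bounded_on_piece: "y \<in> piece idx j \<Longrightarrow> \<bar>H y\<bar> \<le> (1 + C) * inf_piece j"
  using H_le_inf_piece_mult H_nonneg by simp

lemma lip_piece_bounds:
  assumes "y \<in> piece idx j"
  shows "0 \<le> lip_piece \<theta> idx F H j" and "lip_piece \<theta> idx F H j \<le> theta_norm_piece \<theta> idx F H j"
    and "\<And>y'. y' \<in> piece idx j \<Longrightarrow>
      \<bar>H y - H y'\<bar> \<le> lip_piece \<theta> idx F H j * d_theta \<theta> idx F y y'"
proof -
  have B: "0 \<le> C * inf_piece j" using C_nonneg inf_piece_nonneg[OF assms] by simp
  show "0 \<le> lip_piece \<theta> idx F H j"
    using lip_piece_nonneg[OF theta_nonneg B lipschitz_piece] .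
  show "lip_piece \<theta> idx F H j \<le> theta_norm_piece \<theta> idx F H j"
    unfolding theta_norm_piece_eq
    using sup_abs_piece_nonneg[where H = H, OF abs_bounded_on_piece] by simp
  show "\<bar>H y - H y'\<bar> \<le> lip_piece \<theta> idx F H j * d_theta \<theta> idx F y y'"
    if "y' \<in> piece idx j" for y'
    using abs_diff_le_lip_piece[OF theta_nonneg B lipschitz_piece assms that] .
qed

lemma H_le_theta_norm_piece: "H y \<le> theta_norm_piece \<theta> idx F H (idx y)"
proof -
  have y: "y \<in> piece idx (idx y)" by (simp add: piece_def)
  have "H y \<le> sup_abs_piece idx H (idx y)"
    using abs_le_sup_abs_piece[where H = H, OF abs_bounded_on_piece y] H_nonneg[of y] by simp
  then show ?thesis
    unfolding theta_norm_piece_eq using lip_piece_bounds(1)[OF y] by simp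
qed

lemma abs_h_tilde_le_one: "\<bar>h_tilde \<theta> idx F H y l\<bar> \<le> 1"
  using H_le_theta_norm_piece[of y] theta_norm_piece_lt_tau_tilde[of \<theta> idx F H y]
    H_nonneg[of y] by (simp add: h_tilde_def divide_le_eq)

lemma h_tilde_lower_bound:
  assumes "0 \<le> m" "m \<le> H y"
  shows "m / ((1 + 2 * C) * m + 1) \<le> h_tilde \<theta> idx F H y l"
proof -
  have y: "y \<in> piece idx (idx y)" by (simp add: piece_def)
  have "m / ((1 + 2 * C) * m + 1) \<le> H y / ((1 + 2 * C) * H y + 1)"
    using assms C_nonneg by (intro divide_affine_mono) auto
  also have "\<dots> \<le> H y / real (tau_tilde \<theta> idx F H y)"
    using tau_tilde_le[of \<theta> idx F H y] theta_norm_piece_le[OF y] H_le_theta_norm_piece[of y]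
      H_nonneg[of y] tau_tilde_pos[of \<theta> idx F H y]
    by (intro divide_left_mono) auto
  finally show ?thesis by (simp add: h_tilde_def)
qed

lemma h_tilde_lipschitz:
  assumes y: "y \<in> piece idx j" and y': "y' \<in> piece idx j"
  shows "\<bar>h_tilde \<theta> idx F H y l - h_tilde \<theta> idx F H y' l\<bar> \<le> d_theta \<theta> idx F y y'"
proof -
  have j: "idx y = j" "idx y' = j" using y y' by (auto simp: piece_def)
  let ?t = "real (tau_tilde \<theta> idx F H y)"
  have t_pos: "0 < ?t" using tau_tilde_pos by simp
  have "\<bar>H y - H y'\<bar> \<le> lip_piece \<theta> idx F H j * d_theta \<theta> idx F y y'"
    using lip_piece_bounds(3)[OF y y'] .
  also have "\<dots> \<le> ?t * d_theta \<theta> idx F y y'"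
    using lip_piece_bounds(2)[OF y] theta_norm_piece_lt_tau_tilde[of \<theta> idx F H y] j
      d_theta_nonneg[OF theta_nonneg]
    by (intro mult_right_mono) auto
  finally have "\<bar>H y - H y'\<bar> / ?t \<le> d_theta \<theta> idx F y y'"
    using t_pos by (simp add: divide_le_eq mult.commute)
  then show ?thesis
    using tau_tilde_eq_if_same_piece[of idx y y' \<theta> F H] j
    by (simp add: h_tilde_def diff_divide_distrib[symmetric])
qed

lemma h_tilde_uniform_lower_bound:
  assumes infH: "0 < Inf (range H)"
  obtains b where "0 < b" and "\<And>y l. b \<le> h_tilde \<theta> idx F H y l"
proof
  let ?m = "Inf (range H)"
  show "0 < ?m / ((1 + 2 * C) * ?m + 1)"
    using infH C_nonneg by (simp add: add_pos_nonneg)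
  have m_le: "?m \<le> H y" for y
    by (rule cInf_lower) (auto intro!: bdd_belowI[of _ 0] H_nonneg)
  show "?m / ((1 + 2 * C) * ?m + 1) \<le> h_tilde \<theta> idx F H y l" for y l
    using infH by (intro h_tilde_lower_bound[OF _ m_le]) simp
qed

lemma Delta_Inf_Sup_bounds:
  assumes "0 < Inf (range H)"
  defines "h \<equiv> (\<lambda>(y, l). h_tilde \<theta> idx F H y l) ` Delta \<theta> idx F H"
    and "abs_h \<equiv> (\<lambda>(y, l). \<bar>h_tilde \<theta> idx F H y l\<bar>) ` Delta \<theta> idx F H"
  shows "0 < Inf h" and "Inf h \<le> Sup abs_h" and "Sup abs_h \<le> 1"
proof -
  obtain b where b_pos: "0 < b" and b_le: "\<And>y l. b \<le> h_tilde \<theta> idx F H y l"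
    using h_tilde_uniform_lower_bound[OF assms(1)] by blast
  have h_base: "h_tilde \<theta> idx F H y 0 \<in> h"
    and abs_h_base: "\<bar>h_tilde \<theta> idx F H y 0\<bar> \<in> abs_h" for y
    unfolding h_def abs_h_def using Delta_base[of y \<theta> idx F H] by force+
  have h_bdd: "bdd_below h"
    unfolding h_def using b_le by (auto intro!: bdd_belowI[of _ b])
  have abs_h_bdd: "bdd_above abs_h"
    unfolding abs_h_def using abs_h_tilde_le_one by (auto intro!: bdd_aboveI[of _ 1])
  have "b \<le> Inf h"
  proof (rule cInf_greatest)
    show "h \<noteq> {}" using h_base by blast
    show "b \<le> x" if "x \<in> h" for x
      using that b_le unfolding h_def by auto
  qed
  then show "0 < Inf h" using b_pos by linarith
  have "Inf h \<le> h_tilde \<theta> idx F H undefined 0"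
    by (rule cInf_lower[OF h_base h_bdd])
  also have "\<dots> \<le> \<bar>h_tilde \<theta> idx F H undefined 0\<bar>"
    by simp
  also have "\<dots> \<le> Sup abs_h"
    by (rule cSup_upper[OF abs_h_base abs_h_bdd])
  finally show "Inf h \<le> Sup abs_h" .
  show "Sup abs_h \<le> 1"
  proof (rule cSup_least)
    show "abs_h \<noteq> {}" using abs_h_base by blast
    show "x \<le> 1" if "x \<in> abs_h" for x
      using that abs_h_tilde_le_one unfolding abs_h_def by auto
  qed
qed

end

theorem lemma3p1:
  fixes \<theta> :: real and idx :: "'a \<Rightarrow> nat" and F :: "'a \<Rightarrow> 'a" and H :: "'a \<Rightarrow> real"
  assumes theta: "0 < \<theta>" "\<theta> < 1"
    and Hpos: "\<And>y. 0 < H y"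
    and Hreg: "\<exists>C\<ge>1. \<forall>j. \<forall>y\<in>piece idx j. \<forall>y'\<in>piece idx j. y \<noteq> y' \<longrightarrow>
                 \<bar>H y - H y'\<bar> \<le> C * Inf (H ` piece idx j) * d_theta \<theta> idx F y y'"
    and infH: "0 < Inf (range H)"
  shows "(\<forall>y. H y = (\<Sum>l<tau_tilde \<theta> idx F H y. h_tilde \<theta> idx F H y l))
    \<and> 0 < Inf ((\<lambda>(y, l). h_tilde \<theta> idx F H y l) ` Delta \<theta> idx F H)
    \<and> Inf ((\<lambda>(y, l). h_tilde \<theta> idx F H y l) ` Delta \<theta> idx F H)
        \<le> Sup ((\<lambda>(y, l). \<bar>h_tilde \<theta> idx F H y l\<bar>) ` Delta \<theta> idx F H)
    \<and> Sup ((\<lambda>(y, l). \<bar>h_tilde \<theta> idx F H y l\<bar>) ` Delta \<theta> idx F H) \<le> 1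
    \<and> (\<forall>j. \<forall>y\<in>piece idx j. \<forall>y'\<in>piece idx j. \<forall>l. l < tau_tilde \<theta> idx F H y \<longrightarrow>
         \<bar>h_tilde \<theta> idx F H y l - h_tilde \<theta> idx F H y' l\<bar> \<le> d_theta \<theta> idx F y y')"
proof -
  obtain C where "C \<ge> 1" and "\<forall>j. \<forall>y\<in>piece idx j. \<forall>y'\<in>piece idx j. y \<noteq> y' \<longrightarrow>
      \<bar>H y - H y'\<bar> \<le> C * Inf (H ` piece idx j) * d_theta \<theta> idx F y y'"
    using Hreg by blast
  then interpret regular_roof \<theta> idx F H C
    using theta Hpos by unfold_locales (auto simp: less_imp_le)
  show ?thesis
    by (intro conjI allI ballI impI Delta_Inf_Sup_bounds[OF infH] h_tilde_lipschitz)
      (simp_all add: sum_h_tilde)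
qed

end
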